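(* Consider the three-mass system in $\mathbb{R}^2$ described in the context, reduced by $x$-translation symmetry to a vector field on $TQ/\mathbb{R}$. Let $\hat q_*\in Q/\mathbb{R}$ be a non-degenerate minimum of the reduced potential $\hat U$, i.e. $\mathrm{d}\hat U(\hat q_* )=0$ and the Hessian $\hat K$ of $\hat U$ at $\hat q_*$ is positive definite, and suppose the total Rayleigh dissipation function $R$ is positive definite on the fiber of $TQ/\mathbb{R}$ above $\hat q_*$. Then $(\hat q_*,0)\in TQ/\mathbb{R}$ is a robustly stable equilibrium of the reduced system.
   Context: Three unit masses $q_i=(x_i,z_i)\in\mathbb{R}^2$, $Q=\{q\in\mathbb{R}^6:q_i\neq q_j\}$, $\ell_k=\|q_i-q_j\|$ for $\{i,j,k\}=\{1,2,3\}$, $\chi(s)=\tfrac12 s^2$ for $s<0$ and $0$ otherwise (tacitly smoothed near $0$). Equations of motion: $\ddot q=F(q,\dot q)-\mathrm{d}U(q)$ with $U=\frac{\kappa_s}{2}\sum_k(\ell_k-\bar\ell_k)^2+\kappa_{\mathrm{np}}\sum_i\chi(z_i)+\sum_i z_i$ and $F=-\partial R/\partial\dot q$, where $R=\frac{\nu_s}{2}\sum_k\dot\ell_k^2-\frac{\nu_{\mathrm{ns}}}{2}\sum_i\chi'(z_i)\dot x_i^2+\frac{\nu_{\mathrm{db}}}{2}\sum_i\chi(z_i)\dot z_i^2$, all constants positive. Everything is invariant under the free proper action of $(\mathbb{R},+)$ translating all $x_i$ (trivially on velocities), giving reduced potential $\hat U$ with $U=\hat U\circ\pi$ and a reduced vector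 field on $TQ/\mathbb{R}$. An equilibrium $x_*$ of $\dot x=f(x)$ is robustly stable if $f(x_* )=0$ and the spectrum of $Df(x_* )$ lies strictly in the open left half-plane. *)

theory Defs
  imports "HOL-Analysis.Analysis"
begin

text \<open>Configuration q = (x, z) with x, z :: real^3; mass i sits at (x$i, z$i).
  Velocities v = (vx, vz) of the same type.\<close>

type_synonym config = "(real^3) \<times> (real^3)"

definition pt :: "config \<Rightarrow> 3 \<Rightarrow> real \<times> real" where
  "pt q i = (fst q $ i, snd q $ i)"

definition inQ :: "config \<Rightarrow> bool" where
  "inQ q \<longleftrightarrow> (\<forall>i j. i \<noteq> j \<longrightarrow> pt q i \<noteq> pt q j)"

definition opp :: "3 \<Rightarrow> 3 \<times> 3" where
  "opp k = (if k = 1 then (2, 3) else if k = 2 then (3, 1) else (1, 2))"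

definition ell :: "config \<Rightarrow> 3 \<Rightarrow> real" where
  "ell q k = dist (pt q (fst (opp k))) (pt q (snd (opp k)))"

definition ell_dot :: "config \<Rightarrow> config \<Rightarrow> 3 \<Rightarrow> real" where
  "ell_dot q v k =
     ((pt q (fst (opp k)) - pt q (snd (opp k))) \<bullet> (pt v (fst (opp k)) - pt v (snd (opp k))))
     / ell q k"

definition Upot :: "(real \<Rightarrow> real) \<Rightarrow> real \<Rightarrow> real \<Rightarrow> real^3 \<Rightarrow> config \<Rightarrow> real" where
  "Upot chi ks knp lbar q =
     ks / 2 * (\<Sum>k\<in>UNIV. (ell q k - lbar $ k)^2)
     + knp * (\<Sum>i\<in>UNIV. chi (snd q $ i)) + (\<Sum>i\<in>UNIV. snd q $ i)"

text \<open>Rayleigh dissipation function R(q, v); chi1 is the derivative of chi.\<close>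
definition Rdiss :: "(real \<Rightarrow> real) \<Rightarrow> (real \<Rightarrow> real) \<Rightarrow> real \<Rightarrow> real \<Rightarrow> real \<Rightarrow>
                    config \<Rightarrow> config \<Rightarrow> real" where
  "Rdiss chi chi1 nus nuns nudb q v =
     nus / 2 * (\<Sum>k\<in>UNIV. (ell_dot q v k)^2)
     - nuns / 2 * (\<Sum>i\<in>UNIV. chi1 (snd q $ i) * (fst v $ i)^2)
     + nudb / 2 * (\<Sum>i\<in>UNIV. chi (snd q $ i) * (snd v $ i)^2)"

text \<open>Gradient (w.r.t. the Euclidean inner product, unit masses).\<close>
definition grad :: "('a::real_inner \<Rightarrow> real) \<Rightarrow> 'a \<Rightarrow> 'a" where
  "grad g x = (THE D. GDERIV g x :> D)"

text \<open>Acceleration: q'' = F(q,q') - dU(q), F = - dR/dq'.\<close>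
definition accel :: "(real \<Rightarrow> real) \<Rightarrow> (real \<Rightarrow> real) \<Rightarrow> real \<Rightarrow> real \<Rightarrow> real^3 \<Rightarrow>
                     real \<Rightarrow> real \<Rightarrow> real \<Rightarrow> config \<Rightarrow> config \<Rightarrow> config" where
  "accel chi chi1 ks knp lbar nus nuns nudb q v =
     - grad (Rdiss chi chi1 nus nuns nudb q) v - grad (Upot chi ks knp lbar) q"

text \<open>Coordinates on Q/R (quotient by x-translations):
  r = (x2 - x1, x3 - x1, z1, z2, z3).  sec is the global section x1 = 0,
  proj_vel the (linear) differential of the quotient map on velocities.
  TQ/R is identified with (Q/R) x R^6.\<close>
definition sec :: "real^5 \<Rightarrow> config" where
  "sec r = (vector [0, r$1, r$2], vector [r$3, r$4, r$5])"

definition proj_vel :: "config \<Rightarrow> real^5" where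
  "proj_vel v = vector [fst v $ 2 - fst v $ 1, fst v $ 3 - fst v $ 1,
                        snd v $ 1, snd v $ 2, snd v $ 3]"

definition Qhat :: "(real^5) set" where
  "Qhat = {r. inQ (sec r)}"

text \<open>Reduced potential: U = Uhat o pi.\<close>
definition Uhat :: "(real \<Rightarrow> real) \<Rightarrow> real \<Rightarrow> real \<Rightarrow> real^3 \<Rightarrow> real^5 \<Rightarrow> real" where
  "Uhat chi ks knp lbar r = Upot chi ks knp lbar (sec r)"

definition red_field :: "(real \<Rightarrow> real) \<Rightarrow> (real \<Rightarrow> real) \<Rightarrow> real \<Rightarrow> real \<Rightarrow> real^3 \<Rightarrow>
                     real \<Rightarrow> real \<Rightarrow> real \<Rightarrow> (real^5) \<times> config \<Rightarrow> (real^5) \<times> config" where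
  "red_field chi chi1 ks knp lbar nus nuns nudb s =
     (proj_vel (snd s), accel chi chi1 ks knp lbar nus nuns nudb (sec (fst s)) (snd s))"

text \<open>Spectrum of a real linear map: eigenvalues of its complexification,
  i.e. L(u + i w) = lambda (u + i w) with (u,w) nonzero.\<close>
definition cspectrum :: "('a::real_vector \<Rightarrow> 'a) \<Rightarrow> complex set" where
  "cspectrum L = {c. \<exists>u w. (u \<noteq> 0 \<or> w \<noteq> 0) \<and>
       L u = Re c *\<^sub>R u - Im c *\<^sub>R w \<and> L w = Im c *\<^sub>R u + Re c *\<^sub>R w}"

definition robustly_stable :: "('a::euclidean_space \<Rightarrow> 'a) \<Rightarrow> 'a \<Rightarrow> bool" where
  "robustly_stable f xs \<longleftrightarrow> f xs = 0 \<and>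
     (\<exists>L. (f has_derivative L) (at xs) \<and> (\<forall>c\<in>cspectrum L. Re c < 0))"

end

theory Submission
  imports Defs
begin

text \<open>Write \<open>P\<close> for the differential of the quotient map, so that \<open>U = \<hat>U \<circ> P\<close> and
  \<open>\<nabla>U = P\<^sup>T \<nabla>\<hat>U\<close>, and write \<open>R(q, v) = \<langle>v, B(q) v\<rangle> / 2\<close>. Since the damping force \<open>- B(q) v\<close>
  is linear in \<open>v\<close>, the linearization of the reduced field at \<open>(q\<^sub>*, 0)\<close> is
  \<open>L (u, v) = (P v, - B(q\<^sub>*) v - P\<^sup>T K u)\<close>. For a complex eigenvector \<open>(u, v)\<close> with
  eigenvalue \<open>\<lambda>\<close>, pairing the second block with \<open>v\<close> and substituting the first gives the energy
  identity \<open>Re \<lambda> (|v|\<^sup>2 + \<langle>u, K u\<rangle>) = - \<langle>v, B v\<rangle>\<close>. This needs \<open>K\<close> symmetric, which holds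
  because \<open>K\<close> is the derivative of a gradient at a single point (a second-difference argument,
  no continuity of \<open>K\<close> required). If \<open>v \<noteq> 0\<close> the right side is negative; if \<open>v = 0\<close> then
  \<open>P\<^sup>T K u = 0\<close>, and injectivity of \<open>P\<^sup>T\<close> and definiteness of \<open>K\<close> force \<open>u = 0\<close>.\<close>

lemma exhaust_5:
  fixes x :: 5
  shows "x = 1 \<or> x = 2 \<or> x = 3 \<or> x = 4 \<or> x = 5"
proof (induct x)
  case (of_int z)
  then have "z = 0 \<or> z = 1 \<or> z = 2 \<or> z = 3 \<or> z = 4" by fastforce
  then show ?case by auto
qed

lemma forall_5: "(\<forall>i::5. P i) \<longleftrightarrow> P 1 \<and> P 2 \<and> P 3 \<and> P 4 \<and> P 5"
  by (metis exhaust_5)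

lemma UNIV_5: "UNIV = {1, 2, 3, 4, 5::5}"
  using exhaust_5 by auto

lemma sum_5: "sum f (UNIV::5 set) = f 1 + f 2 + f 3 + f 4 + f 5"
  unfolding UNIV_5 by (simp add: ac_simps)

lemma vector_5 [simp]:
  "(vector [a, b, c, d, e] :: ('a::zero)^5) $ 1 = a"
  "(vector [a, b, c, d, e] :: ('a::zero)^5) $ 2 = b"
  "(vector [a, b, c, d, e] :: ('a::zero)^5) $ 3 = c"
  "(vector [a, b, c, d, e] :: ('a::zero)^5) $ 4 = d"
  "(vector [a, b, c, d, e] :: ('a::zero)^5) $ 5 = e"
  unfolding vector_def by simp_all

subsection \<open>Gradients and symmetry of the Hessian\<close>

lemma grad_eqI:
  fixes f :: "'a::real_inner \<Rightarrow> real"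
  assumes "GDERIV f x :> D"
  shows "grad f x = D"
  unfolding grad_def
proof (rule the_equality)
  show "GDERIV f x :> D" by fact
  fix D' assume "GDERIV f x :> D'"
  then have "(\<lambda>h. h \<bullet> D') = (\<lambda>h. h \<bullet> D)"
    using assms unfolding gderiv_def by (rule has_derivative_unique)
  then have "(D' - D) \<bullet> D' = (D' - D) \<bullet> D" by meson
  then have "(D' - D) \<bullet> (D' - D) = 0" by (simp add: inner_diff_right)
  then show "D' = D" by simp
qed

lemma second_difference_mean_value:
  fixes f :: "'a::real_inner \<Rightarrow> real"
  assumes fd: "\<And>y. y \<in> S \<Longrightarrow> (f has_derivative (\<lambda>h. G y \<bullet> h)) (at y)"
    and segments: "\<And>s. s \<in> {0..t} \<Longrightarrow> x + s *\<^sub>R h \<in> S \<and> x + s *\<^sub>R h + t *\<^sub>R k \<in> S"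
    and t: "0 \<le> t"
  obtains s where "s \<in> {0..t}"
    and "f (x + t *\<^sub>R h + t *\<^sub>R k) - f (x + t *\<^sub>R h) - f (x + t *\<^sub>R k) + f x
           = t * ((G (x + s *\<^sub>R h + t *\<^sub>R k) - G (x + s *\<^sub>R h)) \<bullet> h)"
proof -
  define \<phi> where "\<phi> s = f (x + s *\<^sub>R h + t *\<^sub>R k) - f (x + s *\<^sub>R h)" for s
  have deriv: "(\<phi> has_derivative (\<lambda>d. d * ((G (x + s *\<^sub>R h + t *\<^sub>R k) - G (x + s *\<^sub>R h)) \<bullet> h)))
          (at s within {0..t})" if "s \<in> {0..t}" for s
  proof -
    have "((\<lambda>s. x + s *\<^sub>R h + t *\<^sub>R k) has_derivative (\<lambda>d. d *\<^sub>R h)) (at s within {0..t})"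
      "((\<lambda>s. x + s *\<^sub>R h) has_derivative (\<lambda>d. d *\<^sub>R h)) (at s within {0..t})"
      by (auto intro!: derivative_eq_intros)
    from has_derivative_diff[OF has_derivative_compose[OF this(1) fd]
        has_derivative_compose[OF this(2) fd]] segments[OF that]
    have "(\<phi> has_derivative (\<lambda>d. G (x + s *\<^sub>R h + t *\<^sub>R k) \<bullet> (d *\<^sub>R h)
              - G (x + s *\<^sub>R h) \<bullet> (d *\<^sub>R h))) (at s within {0..t})"
      unfolding \<phi>_def by simp
    then show ?thesis
      by (simp add: inner_diff_left inner_commute[of h] right_diff_distrib)
  qed
  then obtain s where "s \<in> {0..t}"
    and "\<phi> t - \<phi> 0 = (t - 0) * ((G (x + s *\<^sub>R h + t *\<^sub>R k) - G (x + s *\<^sub>R h)) \<bullet> h)"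
    using mvt_very_simple[OF t, of \<phi>, OF deriv] by auto
  then show thesis
    by (intro that) (auto simp: \<phi>_def)
qed

lemma second_difference_estimate:
  fixes f :: "'a::real_inner \<Rightarrow> real"
  assumes fd: "\<And>y. y \<in> ball x d \<Longrightarrow> (f has_derivative (\<lambda>h. G y \<bullet> h)) (at y)"
    and est: "\<And>y. norm (y - x) < d \<Longrightarrow> norm (G y - G x - K (y - x)) \<le> e * norm (y - x)"
    and lin: "linear K" and t: "0 < t" "t * (norm h + norm k) < d" and e: "0 \<le> e"
  shows "\<bar>(f (x + t *\<^sub>R h + t *\<^sub>R k) - f (x + t *\<^sub>R h) - f (x + t *\<^sub>R k) + f x) - t\<^sup>2 * (h \<bullet> K k)\<bar>
           \<le> 2 * e * t\<^sup>2 * (norm h + norm k) * norm h"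
proof -
  let ?r = "t * (norm h + norm k)"
  have close: "norm (s *\<^sub>R h) \<le> ?r" "norm (s *\<^sub>R h + t *\<^sub>R k) \<le> ?r" if "s \<in> {0..t}" for s
  proof -
    have "s * norm h \<le> t * norm h" using that by (simp add: mult_right_mono)
    then show "norm (s *\<^sub>R h) \<le> ?r" "norm (s *\<^sub>R h + t *\<^sub>R k) \<le> ?r"
      using that t norm_triangle_ineq[of "s *\<^sub>R h" "t *\<^sub>R k"]
      by (auto simp: distrib_left intro: add_increasing2)
  qed
  have ball: "x + v \<in> ball x d" if "norm v \<le> ?r" for v
    using that t by (simp add: dist_norm)
  have "x + s *\<^sub>R h \<in> ball x d \<and> x + s *\<^sub>R h + t *\<^sub>R k \<in> ball x d" if "s \<in> {0..t}" for s
    using ball[OF close(1)[OF that]] ball[OF close(2)[OF that]] by (simp add: add.assoc)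
  then obtain s where s: "s \<in> {0..t}" and mean_value:
    "f (x + t *\<^sub>R h + t *\<^sub>R k) - f (x + t *\<^sub>R h) - f (x + t *\<^sub>R k) + f x
       = t * ((G (x + s *\<^sub>R h + t *\<^sub>R k) - G (x + s *\<^sub>R h)) \<bullet> h)"
    using second_difference_mean_value[OF fd] t by (metis less_imp_le)
  define R1 where "R1 = G (x + s *\<^sub>R h + t *\<^sub>R k) - G x - K (s *\<^sub>R h + t *\<^sub>R k)"
  define R2 where "R2 = G (x + s *\<^sub>R h) - G x - K (s *\<^sub>R h)"
  have R: "norm R1 \<le> e * ?r" "norm R2 \<le> e * ?r"
    using est[of "x + s *\<^sub>R h + t *\<^sub>R k"] est[of "x + s *\<^sub>R h"] close[OF s] t e
    unfolding R1_def R2_def by (auto simp: add.assoc intro: order_trans mult_left_mono)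
  have "\<bar>(R1 - R2) \<bullet> h\<bar> \<le> norm (R1 - R2) * norm h"
    by (rule Cauchy_Schwarz_ineq2)
  also have "\<dots> \<le> (norm R1 + norm R2) * norm h"
    by (simp add: mult_right_mono norm_triangle_ineq4)
  also have "\<dots> \<le> 2 * e * ?r * norm h"
    using R by (intro mult_right_mono) auto
  finally have "\<bar>(R1 - R2) \<bullet> h\<bar> \<le> 2 * e * ?r * norm h" .
  moreover have "G (x + s *\<^sub>R h + t *\<^sub>R k) - G (x + s *\<^sub>R h) = t *\<^sub>R K k + (R1 - R2)"
    using linear_add[OF lin] linear_scale[OF lin] unfolding R1_def R2_def by (simp add: algebra_simps)
  then have gradient_difference:
    "(G (x + s *\<^sub>R h + t *\<^sub>R k) - G (x + s *\<^sub>R h)) \<bullet> h = t * (h \<bullet> K k) + (R1 - R2) \<bullet> h"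
    by (metis inner_add_left inner_scaleR_left inner_commute)
  then have "f (x + t *\<^sub>R h + t *\<^sub>R k) - f (x + t *\<^sub>R h) - f (x + t *\<^sub>R k) + f x - t\<^sup>2 * (h \<bullet> K k)
      = t * ((R1 - R2) \<bullet> h)"
    unfolding mean_value gradient_difference by (simp add: power2_eq_square algebra_simps)
  ultimately show ?thesis
    using t by (simp add: abs_mult power2_eq_square mult_left_mono mult.assoc)
qed

lemma gradient_derivative_asymmetry_le:
  fixes f :: "'a::real_inner \<Rightarrow> real"
  assumes S: "open S" "x \<in> S"
    and fd: "\<And>y. y \<in> S \<Longrightarrow> (f has_derivative (\<lambda>h. G y \<bullet> h)) (at y)"
    and Gd: "(G has_derivative K) (at x)" and e: "0 < e"
  shows "\<bar>h \<bullet> K k - k \<bullet> K h\<bar> \<le> e * (2 * (norm h + norm k)\<^sup>2)"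
proof -
  let ?n = "norm h + norm k"
  have lin: "linear K" using Gd has_derivative_linear by blast
  obtain d0 where d0: "d0 > 0" "ball x d0 \<subseteq> S" using S open_contains_ball by blast
  obtain d1 where d1: "d1 > 0"
    "\<And>y. norm (y - x) < d1 \<Longrightarrow> norm (G y - G x - K (y - x)) \<le> e * norm (y - x)"
    using Gd e unfolding has_derivative_at_alt by blast
  define d where "d = min d0 d1"
  define t where "t = d / (?n + 1)"
  have t: "0 < t" "t * ?n < d"
  proof -
    have "0 < ?n + 1" by (simp add: add_nonneg_pos)
    then show "0 < t" using d0 d1 by (simp add: t_def d_def)
    then have "t * ?n < t * (?n + 1)" by simp
    also have "\<dots> = d" using \<open>0 < ?n + 1\<close> by (simp add: t_def)
    finally show "t * ?n < d" .
  qed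
  have fd': "\<And>y. y \<in> ball x d \<Longrightarrow> (f has_derivative (\<lambda>h. G y \<bullet> h)) (at y)"
    using fd d0 by (auto simp: d_def)
  have est: "\<And>y. norm (y - x) < d \<Longrightarrow> norm (G y - G x - K (y - x)) \<le> e * norm (y - x)"
    using d1 by (simp add: d_def)
  let ?D = "f (x + t *\<^sub>R h + t *\<^sub>R k) - f (x + t *\<^sub>R h) - f (x + t *\<^sub>R k) + f x"
  have "\<bar>?D - t\<^sup>2 * (h \<bullet> K k)\<bar> \<le> 2 * e * t\<^sup>2 * ?n * norm h"
    using fd' est lin t less_imp_le[OF e] by (rule second_difference_estimate)
  moreover have "\<bar>?D - t\<^sup>2 * (k \<bullet> K h)\<bar> \<le> 2 * e * t\<^sup>2 * ?n * norm k"
  proof -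
    have "t * (norm k + norm h) < d" using t(2) by (simp add: add.commute)
    with fd' est lin t(1) have
      "\<bar>f (x + t *\<^sub>R k + t *\<^sub>R h) - f (x + t *\<^sub>R k) - f (x + t *\<^sub>R h) + f x - t\<^sup>2 * (k \<bullet> K h)\<bar>
         \<le> 2 * e * t\<^sup>2 * (norm k + norm h) * norm k"
      using less_imp_le[OF e] by (rule second_difference_estimate)
    then show ?thesis by (simp add: ac_simps)
  qed
  ultimately have "\<bar>(?D - t\<^sup>2 * (k \<bullet> K h)) - (?D - t\<^sup>2 * (h \<bullet> K k))\<bar>
      \<le> 2 * e * t\<^sup>2 * ?n * norm k + 2 * e * t\<^sup>2 * ?n * norm h"
    using abs_triangle_ineq4[of "?D - t\<^sup>2 * (k \<bullet> K h)" "?D - t\<^sup>2 * (h \<bullet> K k)"] by linarith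
  also have "\<dots> = t\<^sup>2 * (e * (2 * ?n\<^sup>2))" by (simp add: power2_eq_square algebra_simps)
  finally have "t\<^sup>2 * \<bar>h \<bullet> K k - k \<bullet> K h\<bar> \<le> t\<^sup>2 * (e * (2 * ?n\<^sup>2))"
    by (simp add: abs_mult flip: right_diff_distrib)
  then show ?thesis using t by simp
qed

lemma gradient_derivative_symmetric:
  fixes f :: "'a::real_inner \<Rightarrow> real"
  assumes "open S" "x \<in> S"
    and "\<And>y. y \<in> S \<Longrightarrow> (f has_derivative (\<lambda>h. G y \<bullet> h)) (at y)"
    and "(G has_derivative K) (at x)"
  shows "h \<bullet> K k = k \<bullet> K h"
proof -
  define c where "c = 2 * (norm h + norm k)\<^sup>2"
  have "0 \<le> c" by (simp add: c_def)
  have "\<bar>h \<bullet> K k - k \<bullet> K h\<bar> \<le> 0"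
  proof (rule field_le_epsilon)
    fix e :: real assume "e > 0"
    with \<open>0 \<le> c\<close> have "0 < e / (c + 1)" by simp
    with assms have "\<bar>h \<bullet> K k - k \<bullet> K h\<bar> \<le> e / (c + 1) * c"
      unfolding c_def by (rule gradient_derivative_asymmetry_le)
    also have "\<dots> \<le> e" using \<open>e > 0\<close> \<open>0 \<le> c\<close> by (simp add: field_simps)
    finally show "\<bar>h \<bullet> K k - k \<bullet> K h\<bar> \<le> 0 + e" by simp
  qed
  then show ?thesis by simp
qed

subsection \<open>Linearization of a field that is linear in the second component\<close>

lemma has_derivative_scaleR_inner_at_zero:
  fixes g :: "'a::real_normed_vector \<Rightarrow> 'c::real_normed_vector" and b :: "'b::real_inner"
  assumes g: "continuous (at x0) g" and b: "norm b \<le> 1"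
  shows "((\<lambda>p. (snd p \<bullet> b) *\<^sub>R g (fst p)) has_derivative (\<lambda>p. (snd p \<bullet> b) *\<^sub>R g x0)) (at (x0, 0))"
  unfolding has_derivative_at_alt
proof (intro conjI allI impI)
  show "bounded_linear (\<lambda>p::'a \<times> 'b. (snd p \<bullet> b) *\<^sub>R g x0)"
    by (intro bounded_linear_intros)
  fix e :: real assume "e > 0"
  then obtain d where d: "d > 0" "\<And>x. dist x x0 < d \<Longrightarrow> dist (g x) (g x0) < e"
    using g unfolding continuous_at_eps_delta by blast
  show "\<exists>d>0. \<forall>y. norm (y - (x0, 0)) < d \<longrightarrow>
      norm ((snd y \<bullet> b) *\<^sub>R g (fst y) - (snd (x0, 0::'b) \<bullet> b) *\<^sub>R g (fst (x0, 0::'b)) -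
            (snd (y - (x0, 0)) \<bullet> b) *\<^sub>R g x0) \<le> e * norm (y - (x0, 0))"
  proof (intro exI[of _ d] conjI allI impI)
    fix y :: "'a \<times> 'b" assume y: "norm (y - (x0, 0)) < d"
    obtain r v where y_eq: "y = (r, v)" by (cases y)
    have "norm (r - x0) \<le> norm (y - (x0, 0))" "norm v \<le> norm (y - (x0, 0))"
      using y_eq by (simp_all add: norm_Pair)
    moreover have "\<bar>v \<bullet> b\<bar> \<le> norm v"
      using Cauchy_Schwarz_ineq2[of v b] mult_left_mono[OF b norm_ge_zero[of v]] by simp
    moreover have "norm (g r - g x0) \<le> e"
      using d(2)[of r] y calculation(1) by (simp add: dist_norm)
    ultimately have "\<bar>v \<bullet> b\<bar> * norm (g r - g x0) \<le> norm (y - (x0, 0)) * e"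
      by (intro mult_mono) (auto intro: order_trans)
    then show "norm ((snd y \<bullet> b) *\<^sub>R g (fst y) - (snd (x0, 0::'b) \<bullet> b) *\<^sub>R g (fst (x0, 0::'b)) -
            (snd (y - (x0, 0)) \<bullet> b) *\<^sub>R g x0) \<le> e * norm (y - (x0, 0))"
      by (simp add: y_eq mult.commute flip: scaleR_diff_right)
  qed (rule d(1))
qed

lemma has_derivative_linear_family_at_zero:
  fixes M :: "'a::real_normed_vector \<Rightarrow> 'b::euclidean_space \<Rightarrow> 'c::real_normed_vector"
  assumes lin: "\<And>r. linear (M r)"
    and cont: "\<And>b. b \<in> Basis \<Longrightarrow> continuous (at x0) (\<lambda>r. M r b)"
  shows "((\<lambda>p. M (fst p) (snd p)) has_derivative (\<lambda>p. M x0 (snd p))) (at (x0, 0))"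
proof -
  have expand: "M r v = (\<Sum>b\<in>Basis. (v \<bullet> b) *\<^sub>R M r b)" for r v
  proof -
    have "M r v = M r (\<Sum>b\<in>Basis. (v \<bullet> b) *\<^sub>R b)" by (simp add: euclidean_representation)
    also have "\<dots> = (\<Sum>b\<in>Basis. (v \<bullet> b) *\<^sub>R M r b)"
      by (simp add: linear_sum[OF lin] linear_scale[OF lin])
    finally show ?thesis .
  qed
  have "((\<lambda>p. \<Sum>b\<in>Basis. (snd p \<bullet> b) *\<^sub>R M (fst p) b) has_derivative
          (\<lambda>p. \<Sum>b\<in>Basis. (snd p \<bullet> b) *\<^sub>R M x0 b)) (at (x0, 0))"
    by (intro has_derivative_sum has_derivative_scaleR_inner_at_zero cont) auto
  then show ?thesis by (simp add: expand[symmetric])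
qed

subsection \<open>Spectrum of a damped linear oscillator\<close>

lemma cspectrum_damped_oscillator_Re_neg:
  fixes P :: "'v::real_inner \<Rightarrow> 'q::real_inner" and A :: "'q \<Rightarrow> 'v"
    and K :: "'q \<Rightarrow> 'q" and B :: "'v \<Rightarrow> 'v"
  assumes adjoint: "\<And>y v. y \<bullet> P v = v \<bullet> A y"
    and A_inj: "\<And>y. A y = 0 \<Longrightarrow> y = 0"
    and K: "linear K" "\<And>h k. h \<bullet> K k = k \<bullet> K h" "\<And>h. h \<noteq> 0 \<Longrightarrow> 0 < h \<bullet> K h"
    and B: "linear B" "\<And>v. v \<noteq> 0 \<Longrightarrow> 0 < v \<bullet> B v"
    and c: "c \<in> cspectrum (\<lambda>p. (P (snd p), - B (snd p) - A (K (fst p))))"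
  shows "Re c < 0"
proof -
  let ?a = "Re c" and ?b = "Im c"
  obtain u1 u2 w1 w2 where nz: "(u1, u2) \<noteq> 0 \<or> (w1, w2) \<noteq> 0"
    and E1: "P u2 = ?a *\<^sub>R u1 - ?b *\<^sub>R w1" and E2: "- B u2 - A (K u1) = ?a *\<^sub>R u2 - ?b *\<^sub>R w2"
    and E3: "P w2 = ?b *\<^sub>R u1 + ?a *\<^sub>R w1" and E4: "- B w2 - A (K w1) = ?b *\<^sub>R u2 + ?a *\<^sub>R w2"
    using c unfolding cspectrum_def by auto
  have K_nonneg: "0 \<le> h \<bullet> K h" for h
    using K(3)[of h] linear_0[OF K(1)] by (cases "h = 0") auto
  have B_nonneg: "0 \<le> v \<bullet> B v" for v
    using B(2)[of v] linear_0[OF B(1)] by (cases "v = 0") auto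
  show ?thesis
  proof (cases "u2 = 0 \<and> w2 = 0")
    case True
    then have "A (K u1) = 0" "A (K w1) = 0"
      using E2 E4 linear_0[OF B(1)] by simp_all
    then have "u1 = 0" "w1 = 0"
      using A_inj K(3) by force+
    with True nz show ?thesis by (simp add: zero_prod_def)
  next
    case False
    have "u2 \<bullet> A (K u1) = ?a * (u1 \<bullet> K u1) - ?b * (w1 \<bullet> K u1)"
      using adjoint[of "K u1" u2] E1 by (simp add: inner_commute[of "K u1"] inner_diff_left)
    moreover have "w2 \<bullet> A (K w1) = ?b * (u1 \<bullet> K w1) + ?a * (w1 \<bullet> K w1)"
      using adjoint[of "K w1" w2] E3 by (simp add: inner_commute[of "K w1"] inner_add_left)
    moreover have "u2 \<bullet> (- B u2 - A (K u1)) = ?a * (u2 \<bullet> u2) - ?b * (u2 \<bullet> w2)"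
      unfolding E2 by (simp add: inner_diff_right)
    moreover have "w2 \<bullet> (- B w2 - A (K w1)) = ?b * (u2 \<bullet> w2) + ?a * (w2 \<bullet> w2)"
      unfolding E4 by (simp add: inner_add_right inner_commute)
    ultimately have energy: "?a * (u2 \<bullet> u2 + w2 \<bullet> w2 + u1 \<bullet> K u1 + w1 \<bullet> K w1)
        = - (u2 \<bullet> B u2 + w2 \<bullet> B w2)"
      using K(2)[of w1 u1] by (simp add: inner_diff_right algebra_simps)
    have "0 < u2 \<bullet> B u2 + w2 \<bullet> B w2"
      using False B(2) B_nonneg by (meson add_pos_nonneg add_nonneg_pos)
    moreover have "0 \<le> u2 \<bullet> u2 + w2 \<bullet> w2 + u1 \<bullet> K u1 + w1 \<bullet> K w1"
      using K_nonneg[of u1] K_nonneg[of w1] by simp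
    ultimately show ?thesis
      using energy by (smt (verit) mult_nonneg_nonneg)
  qed
qed

subsection \<open>The quotient map and the reduced potential\<close>

definition proj_vel_adj :: "real^5 \<Rightarrow> config" where
  "proj_vel_adj y = (vector [- y$1 - y$2, y$1, y$2], vector [y$3, y$4, y$5])"

lemma inner_proj_vel: "y \<bullet> proj_vel v = v \<bullet> proj_vel_adj y"
  by (cases v) (simp add: proj_vel_def proj_vel_adj_def inner_vec_def sum_5 sum_3 algebra_simps)

lemma linear_proj_vel: "linear proj_vel"
  by (rule linearI) (simp_all add: proj_vel_def vec_eq_iff forall_5 algebra_simps)

lemma linear_proj_vel_adj: "linear proj_vel_adj"
  by (rule linearI) (simp_all add: proj_vel_adj_def vec_eq_iff forall_3 algebra_simps)

lemma proj_vel_adj_eq_0D: "proj_vel_adj y = 0 \<Longrightarrow> y = 0"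
  by (simp add: proj_vel_adj_def vec_eq_iff forall_3 forall_5 prod_eq_iff)

lemma linear_sec: "linear sec"
  by (rule linearI) (simp_all add: sec_def vec_eq_iff forall_3)

lemma proj_vel_sec: "proj_vel (sec r) = r"
  by (simp add: sec_def proj_vel_def vec_eq_iff forall_5)

lemma snd_sec_proj_vel: "snd (sec (proj_vel q)) = snd q"
  by (simp add: sec_def proj_vel_def vec_eq_iff forall_3)

lemma pt_sec_proj_vel: "pt (sec (proj_vel q)) i = pt q i - (fst q $ 1, 0)"
proof -
  have "fst (sec (proj_vel q)) $ i = fst q $ i - fst q $ 1"
    using exhaust_3[of i] by (auto simp: sec_def proj_vel_def)
  then show ?thesis by (simp add: pt_def snd_sec_proj_vel)
qed

lemma Upot_eq_Uhat_proj_vel: "Upot chi ks knp lbar q = Uhat chi ks knp lbar (proj_vel q)"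
proof -
  have "ell (sec (proj_vel q)) k = ell q k" for k
    by (simp add: ell_def pt_sec_proj_vel dist_norm)
  then show ?thesis by (simp add: Uhat_def Upot_def snd_sec_proj_vel)
qed

lemma GDERIV_Upot_sec:
  assumes "(Uhat chi ks knp lbar has_derivative (\<lambda>h. g \<bullet> h)) (at r)"
  shows "GDERIV (Upot chi ks knp lbar) (sec r) :> proj_vel_adj g"
proof -
  have "bounded_linear proj_vel" using linear_proj_vel linear_conv_bounded_linear by blast
  then have "((\<lambda>q. Uhat chi ks knp lbar (proj_vel q)) has_derivative (\<lambda>h. g \<bullet> proj_vel h)) (at (sec r))"
    by (rule has_derivative_compose[OF bounded_linear_imp_has_derivative])
      (simp add: proj_vel_sec assms)
  then show ?thesis
    unfolding gderiv_def by (simp add: Upot_eq_Uhat_proj_vel[symmetric] inner_proj_vel fun_eq_iff)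
qed

lemma continuous_pt_sec: "continuous_on UNIV (\<lambda>r. pt (sec r) i)"
proof -
  have "linear (\<lambda>r. pt (sec r) i)"
    using linear_sec by (intro linearI) (simp_all add: pt_def linear_add linear_scale)
  then show ?thesis using linear_conv_bounded_linear linear_continuous_on by blast
qed

lemma open_Qhat: "open Qhat"
proof -
  have "Qhat = (\<Inter>p\<in>{p. fst p \<noteq> snd p}. {r. pt (sec r) (fst p) \<noteq> pt (sec r) (snd p)})"
    by (auto simp: Qhat_def inQ_def)
  moreover have "open {r. pt (sec r) (fst p) \<noteq> pt (sec r) (snd p)}" for p
    by (intro open_Collect_neq continuous_pt_sec)
  ultimately show ?thesis
    using open_INT[of "{p::3 \<times> 3. fst p \<noteq> snd p}"
        "\<lambda>p. {r. pt (sec r) (fst p) \<noteq> pt (sec r) (snd p)}"] by auto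
qed

lemma ell_sec_nonzero: "r \<in> Qhat \<Longrightarrow> ell (sec r) k \<noteq> 0"
  by (auto simp: Qhat_def inQ_def ell_def opp_def)

subsection \<open>The dissipation operator\<close>

definition ell_grad :: "config \<Rightarrow> 3 \<Rightarrow> config" where
  "ell_grad q k =
     (((fst q $ fst (opp k) - fst q $ snd (opp k)) / ell q k) *\<^sub>R (axis (fst (opp k)) 1 - axis (snd (opp k)) 1),
      ((snd q $ fst (opp k) - snd q $ snd (opp k)) / ell q k) *\<^sub>R (axis (fst (opp k)) 1 - axis (snd (opp k)) 1))"

lemma ell_dot_eq_inner: "ell_dot q v k = ell_grad q k \<bullet> v"
  by (cases v)
    (simp add: ell_dot_def ell_grad_def pt_def inner_diff_left inner_axis' divide_inverse
      algebra_simps)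

definition damping :: "(real \<Rightarrow> real) \<Rightarrow> (real \<Rightarrow> real) \<Rightarrow> real \<Rightarrow> real \<Rightarrow> real \<Rightarrow>
                       config \<Rightarrow> config \<Rightarrow> config" where
  "damping chi chi1 nus nuns nudb q v =
     nus *\<^sub>R (\<Sum>k\<in>UNIV. (ell_grad q k \<bullet> v) *\<^sub>R ell_grad q k)
     - nuns *\<^sub>R (\<Sum>i\<in>UNIV. (chi1 (snd q $ i) * fst v $ i) *\<^sub>R (axis i 1, 0))
     + nudb *\<^sub>R (\<Sum>i\<in>UNIV. (chi (snd q $ i) * snd v $ i) *\<^sub>R (0, axis i 1))"

lemma inner_damping:
  "w \<bullet> damping chi chi1 nus nuns nudb q v =
     nus * (\<Sum>k\<in>UNIV. (ell_grad q k \<bullet> v) * (ell_grad q k \<bullet> w))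
     - nuns * (\<Sum>i\<in>UNIV. chi1 (snd q $ i) * fst v $ i * fst w $ i)
     + nudb * (\<Sum>i\<in>UNIV. chi (snd q $ i) * snd v $ i * snd w $ i)"
  by (simp add: damping_def inner_diff_right inner_add_right inner_sum_right inner_Pair_0
      inner_axis inner_commute[of w] mult.assoc)

lemma Rdiss_eq_inner_damping:
  "Rdiss chi chi1 nus nuns nudb q v = (v \<bullet> damping chi chi1 nus nuns nudb q v) / 2"
  by (simp add: Rdiss_def inner_damping ell_dot_eq_inner power2_eq_square mult.assoc
      sum_divide_distrib)

lemma linear_damping: "linear (damping chi chi1 nus nuns nudb q)"
  by (rule linearI) (simp_all add: damping_def inner_add_right scaleR_add_left sum.distrib
      distrib_left scaleR_add_right algebra_simps scaleR_sum_right prod_eq_iff fst_sum snd_sum)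

lemma grad_Rdiss: "grad (Rdiss chi chi1 nus nuns nudb q) v = damping chi chi1 nus nuns nudb q v"
proof (rule grad_eqI)
  let ?B = "damping chi chi1 nus nuns nudb q"
  have "bounded_linear ?B" using linear_damping linear_conv_bounded_linear by blast
  then have "((\<lambda>v. (v \<bullet> ?B v) / 2) has_derivative (\<lambda>h. (v \<bullet> ?B h + h \<bullet> ?B v) / 2)) (at v)"
    by (auto intro!: derivative_eq_intros bounded_linear_imp_has_derivative)
  moreover have "v \<bullet> ?B h = h \<bullet> ?B v" for h
    by (simp add: inner_damping mult.commute mult.left_commute)
  ultimately have "((\<lambda>v. (v \<bullet> ?B v) / 2) has_derivative (\<lambda>h. h \<bullet> ?B v)) (at v)"
    by simp
  then show "GDERIV (Rdiss chi chi1 nus nuns nudb q) v :> ?B v"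
    unfolding gderiv_def Rdiss_eq_inner_damping[abs_def] .
qed

lemma continuous_damping:
  assumes chi: "\<And>x. isCont chi x" and chi1: "\<And>x. isCont chi1 x" and ell: "\<And>k. ell q0 k \<noteq> 0"
  shows "continuous (at q0) (\<lambda>q. damping chi chi1 nus nuns nudb q v)"
proof -
  have "continuous (at q0) (\<lambda>q. ell q k)" for k
    unfolding ell_def pt_def by (intro continuous_intros)
  then have ell_grad: "continuous (at q0) (\<lambda>q. ell_grad q k)" for k
    unfolding ell_grad_def by (intro continuous_intros ell)
  show ?thesis
    unfolding damping_def by (intro continuous_intros ell_grad isCont_o2[OF _ chi] isCont_o2[OF _ chi1])
qed

lemma red_field_eq:
  assumes "\<forall>r\<in>Qhat. (Uhat chi ks knp lbar has_derivative (\<lambda>h. G r \<bullet> h)) (at r)" and "fst s \<in> Qhat"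
  shows "red_field chi chi1 ks knp lbar nus nuns nudb s =
           (proj_vel (snd s),
            - damping chi chi1 nus nuns nudb (sec (fst s)) (snd s) - proj_vel_adj (G (fst s)))"
  using assms by (simp add: red_field_def accel_def grad_Rdiss grad_eqI[OF GDERIV_Upot_sec])

lemma has_derivative_red_field:
  assumes chi: "\<And>x. isCont chi x" and chi1: "\<And>x. isCont chi1 x" and rs: "rs \<in> Qhat"
    and G: "\<forall>r\<in>Qhat. (Uhat chi ks knp lbar has_derivative (\<lambda>h. G r \<bullet> h)) (at r)"
    and K: "(G has_derivative K) (at rs)"
  shows "(red_field chi chi1 ks knp lbar nus nuns nudb has_derivative
           (\<lambda>p. (proj_vel (snd p),
                 - damping chi chi1 nus nuns nudb (sec rs) (snd p) - proj_vel_adj (K (fst p)))))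
           (at (rs, 0))"
proof -
  have "bounded_linear sec" "bounded_linear proj_vel" "bounded_linear proj_vel_adj"
    using linear_sec linear_proj_vel linear_proj_vel_adj linear_conv_bounded_linear by blast+
  note linear_maps = this[THEN bounded_linear_imp_has_derivative]
  have "((\<lambda>p. damping chi chi1 nus nuns nudb (sec (fst p)) (snd p)) has_derivative
          (\<lambda>p. damping chi chi1 nus nuns nudb (sec rs) (snd p))) (at (rs, 0))"
  proof (rule has_derivative_linear_family_at_zero[where M = "\<lambda>r. damping chi chi1 nus nuns nudb (sec r)"])
    show "linear (damping chi chi1 nus nuns nudb (sec r))" for r by (rule linear_damping)
    show "continuous (at rs) (\<lambda>r. damping chi chi1 nus nuns nudb (sec r) v)" for v
      using linear_continuous_at[OF \<open>bounded_linear sec\<close>]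
        continuous_damping[OF chi chi1 ell_sec_nonzero[OF rs]] by (rule isCont_o2)
  qed
  moreover have "((\<lambda>p. proj_vel_adj (G (fst p))) has_derivative (\<lambda>p. proj_vel_adj (K (fst p))))
      (at (rs, 0::config))"
    by (rule has_derivative_compose[OF has_derivative_compose[OF has_derivative_fst] linear_maps(3)])
      (simp_all add: K)
  ultimately have "((\<lambda>s. (proj_vel (snd s),
        - damping chi chi1 nus nuns nudb (sec (fst s)) (snd s) - proj_vel_adj (G (fst s))))
      has_derivative (\<lambda>p. (proj_vel (snd p),
        - damping chi chi1 nus nuns nudb (sec rs) (snd p) - proj_vel_adj (K (fst p))))) (at (rs, 0))"
    by (intro has_derivative_Pair has_derivative_diff has_derivative_minus
        has_derivative_compose[OF has_derivative_snd[OF has_derivative_ident] linear_maps(2)])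
  then show ?thesis
    by (rule has_derivative_transform_within_open[OF _ open_Times[OF open_Qhat open_UNIV]])
      (use rs red_field_eq[OF G] in auto)
qed

theorem proposition8:
  fixes chi chi1 chi2 :: "real \<Rightarrow> real"
    and ks knp nus nuns nudb :: real
    and lbar :: "real^3"
    and rs :: "real^5"
  assumes chi_deriv: "\<And>s. (chi has_real_derivative chi1 s) (at s)"
    and chi1_deriv: "\<And>s. (chi1 has_real_derivative chi2 s) (at s)"
    and chi2_cont: "continuous_on UNIV chi2"
    and chi_smoothed: "\<exists>\<delta>>0. \<forall>s. (s \<le> -\<delta> \<longrightarrow> chi s = s^2 / 2) \<and> (\<delta> \<le> s \<longrightarrow> chi s = 0)"
    and pos: "ks > 0" "knp > 0" "nus > 0" "nuns > 0" "nudb > 0" "\<forall>k. lbar $ k > 0"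
    and rs_in: "rs \<in> Qhat"
    and nondeg_min: "\<exists>G K. (\<forall>r\<in>Qhat. (Uhat chi ks knp lbar has_derivative (\<lambda>h. G r \<bullet> h)) (at r))
                        \<and> G rs = 0 \<and> (G has_derivative K) (at rs)
                        \<and> (\<forall>h. h \<noteq> 0 \<longrightarrow> h \<bullet> K h > 0)"
    and R_posdef: "\<forall>v. v \<noteq> 0 \<longrightarrow> Rdiss chi chi1 nus nuns nudb (sec rs) v > 0"
  shows "robustly_stable (red_field chi chi1 ks knp lbar nus nuns nudb) (rs, 0)"
proof -
  obtain G K where G: "\<forall>r\<in>Qhat. (Uhat chi ks knp lbar has_derivative (\<lambda>h. G r \<bullet> h)) (at r)"
    and G_rs: "G rs = 0" and K: "(G has_derivative K) (at rs)" and K_pos: "\<And>h. h \<noteq> 0 \<Longrightarrow> 0 < h \<bullet> K h"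
    using nondeg_min by blast
  have continuity: "isCont chi x" "isCont chi1 x" for x
    using chi_deriv chi1_deriv by (blast intro: DERIV_isCont)+
  let ?L = "\<lambda>p. (proj_vel (snd p),
    - damping chi chi1 nus nuns nudb (sec rs) (snd p) - proj_vel_adj (K (fst p)))"
  have "(red_field chi chi1 ks knp lbar nus nuns nudb has_derivative ?L) (at (rs, 0))"
    by (rule has_derivative_red_field[OF continuity rs_in G K])
  moreover have "red_field chi chi1 ks knp lbar nus nuns nudb (rs, 0) = 0"
    using red_field_eq[OF G, of "(rs, 0)"] rs_in G_rs linear_0[OF linear_proj_vel]
      linear_0[OF linear_damping] linear_0[OF linear_proj_vel_adj] by (simp add: zero_prod_def)
  moreover have "Re c < 0" if "c \<in> cspectrum ?L" for c
  proof (rule cspectrum_damped_oscillator_Re_neg[OF inner_proj_vel proj_vel_adj_eq_0D _ _ K_pos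
        linear_damping _ that])
    show "linear K" using K has_derivative_linear by blast
    show "h \<bullet> K k = k \<bullet> K h" for h k
      using gradient_derivative_symmetric[OF open_Qhat rs_in _ K] G by blast
    show "v \<noteq> 0 \<Longrightarrow> 0 < v \<bullet> damping chi chi1 nus nuns nudb (sec rs) v" for v
      using R_posdef[rule_format, of v] by (simp add: Rdiss_eq_inner_damping)
  qed
  ultimately show ?thesis
    unfolding robustly_stable_def by (intro conjI exI[of _ ?L] ballI) simp_all
qed
end
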